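(* Let $d$ be a positive integer and $S=\langle 2\rangle\oplus\langle -2d\rangle$. Then $$|\mathrm O(q_S)|=\begin{cases}2^{1+\rho(d)}&\text{if } d\equiv -1\bmod 4\text{ or } 8\mid d,\\ 2^{\rho(d)}&\text{otherwise,}\end{cases}$$ where $\rho(d)$ is the number of distinct prime divisors of $d$.
   Context: $\langle a\rangle$ denotes the rank-one lattice $\mathbb Z e$ with $(e,e)=a$. For an even lattice $S$, $A_S=S^\vee/S$ is its discriminant group with quadratic form $q_S:A_S\to\mathbb Q/2\mathbb Z$, $q_S(x)=(x,x)\bmod 2\mathbb Z$, and $\mathrm O(q_S)$ is the group of automorphisms of $A_S$ preserving $q_S$. Here $A_S\cong\mathbb Z/2\mathbb Z\times\mathbb Z/2d\mathbb Z$. *)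

theory Defs
  imports Complex_Main "HOL-Computational_Algebra.Primes"
begin

text \<open>The rank-two diagonal lattice <a> (+) <b> is Z^2 inside Q^2, with
  bilinear form B(x,y) = a x1 y1 + b x2 y2.\<close>

definition diag_form :: "int \<Rightarrow> int \<Rightarrow> rat \<times> rat \<Rightarrow> rat \<times> rat \<Rightarrow> rat" where
  "diag_form a b x y = of_int a * fst x * fst y + of_int b * snd x * snd y"

definition dual_lattice :: "int \<Rightarrow> int \<Rightarrow> (rat \<times> rat) set" where
  "dual_lattice a b =
     {x. \<forall>m n :: int. diag_form a b x (of_int m, of_int n) \<in> \<int>}"

definition frac_vec :: "rat \<times> rat \<Rightarrow> rat \<times> rat" where
  "frac_vec x = (frac (fst x), frac (snd x))"

text \<open>Discriminant group A_S = S^vee / S, as the set of canonical representatives.\<close>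
definition disc_group :: "int \<Rightarrow> int \<Rightarrow> (rat \<times> rat) set" where
  "disc_group a b = frac_vec ` dual_lattice a b"

definition disc_add :: "rat \<times> rat \<Rightarrow> rat \<times> rat \<Rightarrow> rat \<times> rat" where
  "disc_add x y = frac_vec (fst x + fst y, snd x + snd y)"

text \<open>Discriminant quadratic form q_S(x) = (x,x) mod 2Z: two values are equal
  in Q/2Z iff their difference lies in 2Z.\<close>
definition cong_mod2 :: "rat \<Rightarrow> rat \<Rightarrow> bool" where
  "cong_mod2 r s \<longleftrightarrow> (r - s) / 2 \<in> \<int>"

text \<open>O(q_S): group automorphisms of A_S preserving q_S (as functions
  extended by the identity outside A_S).\<close>
definition O_disc :: "int \<Rightarrow> int \<Rightarrow> ((rat \<times> rat) \<Rightarrow> (rat \<times> rat)) set" where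
  "O_disc a b =
     {f. bij_betw f (disc_group a b) (disc_group a b)
       \<and> (\<forall>x\<in>disc_group a b. \<forall>y\<in>disc_group a b.
             f (disc_add x y) = disc_add (f x) (f y))
       \<and> (\<forall>x\<in>disc_group a b. cong_mod2 (diag_form a b (f x) (f x)) (diag_form a b x x))
       \<and> (\<forall>x. x \<notin> disc_group a b \<longrightarrow> f x = x)}"

end

theory Submission
  imports Defs "HOL-Number_Theory.Totient"
begin

text \<open>
  The discriminant group A_S is Z/2 x Z/2D, generated by e1 = (1/2, 0) and
  e2 = (0, 1/(2D)), and q_S(a e1 + b e2) = (D a^2 - b^2)/(2D) mod 2. An element of O(q_S)
  is determined by the images u, v of e1, e2, which must satisfy 2u = 0, q(u) = q(e1),
  q(v) = q(e2) and b(u, v) = 0. Solving these conditions leaves two families: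
  u = e1, v = t e2 with t^2 = 1 mod 4D, and u = alpha e1 + D e2, v = e1 + t e2 with
  t^2 = D + 1 mod 4D, where alpha in {0, 1} exists only if D = 3 mod 4 or 4 | D; in both
  families t is taken modulo 2D. By the Chinese remainder theorem there are 2^(rho(d) + 1)
  square roots of 1 modulo 4D, so the first family has 2^rho(d) members. The second family
  is empty if D = 4 mod 8, and otherwise is in bijection with the first: via t -> t + D if
  D = 3 mod 4, and via multiplication by a square root of 1 + D modulo 4D if 8 | D.
\<close>

lemma eq_if_dvd_diff:
  fixes M x y :: int
  assumes "M dvd x - y" "x \<in> {0..<M}" "y \<in> {0..<M}"
  shows "x = y"
  using assms by (metis atLeastLessThan_iff mod_eq_dvd_iff mod_pos_pos_trivial)

lemma bounded_multipleE:
  fixes K u n :: int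
  assumes "0 < K" "K dvd u" "0 \<le> u" "u < n * K"
  obtains c where "0 \<le> c" "c < n" "u = K * c"
proof -
  obtain c where c: "u = K * c" using assms(2) by blast
  moreover have "0 \<le> c" using assms(1,3) c by (simp add: zero_le_mult_iff)
  moreover have "c < n" using assms(1,4) c by (simp add: mult.commute)
  ultimately show ?thesis using that by blast
qed

lemma times_dvd_times_iff:
  fixes c D k :: int
  assumes "D \<noteq> 0"
  shows "c * D dvd D * k \<longleftrightarrow> c dvd k"
  using assms by (simp add: mult.commute[of D k])

lemma mod_mult_mod_eq:
  fixes x N c M :: int
  assumes "M dvd N * c"
  shows "(x mod N * c) mod M = (x * c) mod M"
proof -
  have "x mod N * c = x * c - (x div N) * (N * c)"
    by (simp add: algebra_simps flip: minus_div_mult_eq_mod)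
  then show ?thesis using assms by (simp add: mod_eq_dvd_iff)
qed

lemma dvd_square_mod_iff:
  fixes M N x c :: int
  assumes "M dvd 2 * N" "M dvd N^2"
  shows "M dvd (x mod N)^2 - c \<longleftrightarrow> M dvd x^2 - c"
proof -
  define q where "q = x div N"
  have x_mod: "x mod N = x - N * q"
    by (simp add: q_def minus_div_mult_eq_mod [symmetric] algebra_simps)
  have "(x mod N)^2 - c = (x^2 - c) + (N^2 * q^2 - 2 * N * (q * x))"
    unfolding x_mod by (simp add: power2_eq_square algebra_simps)
  moreover have "M dvd N^2 * q^2 - 2 * N * (q * x)"
    by (intro dvd_diff dvd_mult2[OF assms(2)] dvd_mult2[OF assms(1)])
  ultimately show ?thesis by (metis dvd_add_left_iff)
qed

lemma dvd_square_mod_self_iff: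
  fixes M x c :: int
  shows "M dvd (x mod M)^2 - c \<longleftrightarrow> M dvd x^2 - c"
  by (rule dvd_square_mod_iff) (simp_all add: power2_eq_square)

lemma card_prime_factors_mult:
  fixes a b :: nat
  assumes "0 < a" "0 < b" "coprime a b"
  shows "card (prime_factors (a * b)) = card (prime_factors a) + card (prime_factors b)"
proof -
  have "prime_factors a \<inter> prime_factors b = {}"
    using assms(3) by (auto dest: coprime_common_divisor simp: in_prime_factors_iff)
  then show ?thesis using assms by (simp add: prime_factors_product card_Un_disjoint)
qed

section \<open>Square roots of one modulo \<open>M\<close>\<close>

definition sqrts_one :: "int \<Rightarrow> int set" where
  "sqrts_one M = {t. 0 \<le> t \<and> t < M \<and> M dvd t^2 - 1}"

lemma card_sqrts_one_mult:
  fixes a b :: int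
  assumes a: "0 < a" and b: "0 < b" and ab: "coprime a b"
  shows "card (sqrts_one (a * b)) = card (sqrts_one a) * card (sqrts_one b)"
proof -
  have "bij_betw (\<lambda>t. (t mod a, t mod b)) (sqrts_one (a * b)) (sqrts_one a \<times> sqrts_one b)"
  proof (rule bij_betw_imageI)
    show "inj_on (\<lambda>t. (t mod a, t mod b)) (sqrts_one (a * b))"
    proof (rule inj_onI, clarify)
      fix x y assume "x \<in> sqrts_one (a * b)" "y \<in> sqrts_one (a * b)"
        and "x mod a = y mod a" "x mod b = y mod b"
      then have "a * b dvd x - y" "x \<in> {0..<a * b}" "y \<in> {0..<a * b}"
        using ab by (auto simp: sqrts_one_def mod_eq_dvd_iff divides_mult)
      then show "x = y" by (rule eq_if_dvd_diff)
    qed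
  next
    show "(\<lambda>t. (t mod a, t mod b)) ` sqrts_one (a * b) = sqrts_one a \<times> sqrts_one b"
    proof safe
      fix t assume "t \<in> sqrts_one (a * b)"
      then have "a dvd t^2 - 1" "b dvd t^2 - 1"
        by (auto simp: sqrts_one_def dest: dvd_mult_left dvd_mult_right)
      then show "t mod a \<in> sqrts_one a" "t mod b \<in> sqrts_one b"
        using a b by (simp_all add: sqrts_one_def dvd_square_mod_self_iff)
    next
      fix x y assume x: "x \<in> sqrts_one a" and y: "y \<in> sqrts_one b"
      obtain z where "[z = x] (mod a)" "[z = y] (mod b)"
        using binary_chinese_remainder_int[OF ab] by blast
      moreover define t where "t = z mod (a * b)"
      ultimately have ta: "t mod a = x" and tb: "t mod b = y"
        using x y by (simp_all add: t_def cong_def sqrts_one_def mod_mod_cancel)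
      then have "a dvd t^2 - 1" "b dvd t^2 - 1"
        using x y dvd_square_mod_self_iff[of a t 1] dvd_square_mod_self_iff[of b t 1]
        by (simp_all add: sqrts_one_def)
      then have "t \<in> sqrts_one (a * b)"
        using a b ab by (simp add: sqrts_one_def t_def divides_mult)
      then show "(x, y) \<in> (\<lambda>t. (t mod a, t mod b)) ` sqrts_one (a * b)"
        using ta tb by force
    qed
  qed
  then show ?thesis by (simp add: bij_betw_same_card card_cartesian_product)
qed

lemma card_sqrts_one_odd_prime_power:
  fixes p :: int
  assumes p: "prime p" "odd p" and e: "0 < e"
  shows "card (sqrts_one (p^e)) = 2"
proof -
  have "3 \<le> p" using p prime_ge_2_int[of p] by presburger
  moreover have "p \<le> p^e" using e \<open>3 \<le> p\<close> by (simp add: self_le_power)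
  ultimately have pe: "3 \<le> p^e" by linarith
  have "sqrts_one (p^e) = {1, p^e - 1}"
  proof (intro set_eqI iffI)
    fix t assume t: "t \<in> sqrts_one (p^e)"
    then have dvd: "p^e dvd (t + 1) * (t - 1)" and range: "0 \<le> t" "t < p^e"
      by (auto simp: sqrts_one_def power2_eq_square algebra_simps)
    have "\<not> (p dvd t + 1 \<and> p dvd t - 1)"
    proof
      assume "p dvd t + 1 \<and> p dvd t - 1"
      then have "p dvd (t + 1) - (t - 1)" by (meson dvd_diff)
      then show False using \<open>3 \<le> p\<close> zdvd_imp_le[of p 2] by simp
    qed
    then have "p^e dvd t - 1 \<or> p^e dvd t + 1"
      using dvd dvd[unfolded mult.commute[of "t + 1"]] p(1) e
      by (meson prime_imp_prime_elem prime_power_dvd_multD)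
    then show "t \<in> {1, p^e - 1}"
    proof
      assume "p^e dvd t - 1"
      then have "t = 1" using range pe by (intro eq_if_dvd_diff) auto
      then show ?thesis by simp
    next
      assume "p^e dvd t + 1"
      then have "p^e \<le> t + 1" using range by (simp add: zdvd_imp_le)
      then show ?thesis using range by simp
    qed
  next
    fix t assume "t \<in> {1, p^e - 1}"
    moreover have "(p^e - 1)^2 - 1 = p^e * (p^e - 2)" by (simp add: power2_eq_square algebra_simps)
    ultimately show "t \<in> sqrts_one (p^e)" using pe by (auto simp: sqrts_one_def)
  qed
  then show ?thesis using pe by simp
qed

lemma card_sqrts_one_two_power:
  "card (sqrts_one (4 * 2^k)) = 2 * 2 ^ card (prime_factors ((2::nat)^k))"
proof (cases "k = 0")
  case True
  have "sqrts_one 4 = {1, 3}"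
  proof (intro set_eqI iffI)
    fix t assume "t \<in> sqrts_one 4"
    then have "t \<in> {0, 1, 2, 3}" "(4::int) dvd t^2 - 1" by (auto simp: sqrts_one_def)
    then show "t \<in> {1, 3}" by auto
  qed (auto simp: sqrts_one_def)
  then show ?thesis using True by simp
next
  case False
  define K :: int where "K = 2^k"
  have "(2::int)^1 \<le> 2^k" using False by (intro power_increasing) auto
  then have K: "2 \<le> K" unfolding K_def by simp
  have "sqrts_one (4 * K) = {1, 2 * K - 1, 2 * K + 1, 4 * K - 1}"
  proof (intro set_eqI iffI)
    fix t assume t: "t \<in> sqrts_one (4 * K)"
    then have dvd: "4 * K dvd t^2 - 1" and range: "0 \<le> t" "t < 4 * K"
      by (auto simp: sqrts_one_def)
    have "2 dvd t^2 - 1" by (rule dvd_trans[OF _ dvd]) simp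
    then have "odd t" by simp
    then obtain u where u: "t = 2 * u + 1" by (metis oddE)
    have "t^2 - 1 = 4 * (u * (u + 1))" unfolding u by (simp add: power2_eq_square algebra_simps)
    then have "2^k dvd u * (u + 1)" "2^k dvd (u + 1) * u" using dvd by (simp_all add: K_def mult.commute)
    moreover have "prime_elem (2::int)" by (simp add: prime_imp_prime_elem)
    moreover have "odd u \<or> odd (u + 1)" by simp
    ultimately have "K dvd u \<or> K dvd u + 1" unfolding K_def
      using False by (meson prime_power_dvd_multD not_gr0)
    moreover have "0 \<le> u" "u < 2 * K" using range u by auto
    moreover have "u = 0 \<or> u = K" if Ku: "K dvd u"
    proof -
      obtain c where "0 \<le> c" "c < 2" "u = K * c"
        using bounded_multipleE[OF _ Ku, of 2] K \<open>0 \<le> u\<close> \<open>u < 2 * K\<close> by auto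
      then show ?thesis by (cases "c = 0") auto
    qed
    moreover have "u + 1 = K \<or> u + 1 = 2 * K" if Ku1: "K dvd u + 1"
    proof -
      obtain c where "0 \<le> c" "c < 3" "u + 1 = K * c"
        using bounded_multipleE[OF _ Ku1, of 3] K \<open>0 \<le> u\<close> \<open>u < 2 * K\<close> by auto
      then show ?thesis using \<open>0 \<le> u\<close> by (cases "c = 0"; cases "c = 1") auto
    qed
    ultimately have "u = 0 \<or> u = K \<or> u + 1 = K \<or> u + 1 = 2 * K" by blast
    then show "t \<in> {1, 2 * K - 1, 2 * K + 1, 4 * K - 1}" using u by auto
  next
    fix t assume "t \<in> {1, 2 * K - 1, 2 * K + 1, 4 * K - 1}"
    moreover have "(2 * K - 1)^2 - 1 = (4 * K) * (K - 1)" "(2 * K + 1)^2 - 1 = (4 * K) * (K + 1)"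
      "(4 * K - 1)^2 - 1 = (4 * K) * (4 * K - 2)" by (simp_all add: power2_eq_square algebra_simps)
    ultimately show "t \<in> sqrts_one (4 * K)" using K by (auto simp: sqrts_one_def)
  qed
  moreover have "prime_factors ((2::nat)^k) = {2}"
    using False by (simp add: prime_factors_power prime_prime_factors)
  moreover have "card {1, 2 * K - 1, 2 * K + 1, 4 * K - 1} = 4" using K by simp
  ultimately show ?thesis by (simp add: K_def)
qed

lemma card_sqrts_one_odd:
  fixes m :: nat
  assumes "odd m"
  shows "card (sqrts_one (int m)) = 2 ^ card (prime_factors m)"
  using assms
proof (induction m rule: less_induct)
  case (less m)
  show ?case
  proof (cases "m = 1")
    case True
    then have "sqrts_one (int m) = {0}" by (auto simp: sqrts_one_def)
    then show ?thesis using True by simp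
  next
    case False
    then obtain p where p: "prime p" "p dvd m" using prime_factor_nat by blast
    define e where "e = multiplicity p m"
    have "m \<noteq> 0" "\<not> is_unit p" using less.prems p odd_pos by auto
    then obtain m' where m: "m = p^e * m'" and "\<not> p dvd m'"
      unfolding e_def by (rule multiplicity_decompose')
    then have cop: "coprime (p^e) m'" using p by (simp add: prime_imp_coprime)
    have "0 < e"
      using p \<open>m \<noteq> 0\<close> by (simp add: e_def prime_multiplicity_gt_zero_iff prime_imp_prime_elem)
    have "odd p" "odd m'" using p less.prems m by (metis dvd_trans, simp)
    have "0 < m'" using less.prems m by (cases "m' = 0") auto
    moreover have "1 < p^e" using \<open>0 < e\<close> p by (metis one_less_power prime_gt_1_nat)
    ultimately have "m' < m" using m by simp
    have "card (sqrts_one (int m)) = card (sqrts_one (int p ^ e)) * card (sqrts_one (int m'))"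
      using m cop \<open>0 < m'\<close> p by (simp add: card_sqrts_one_mult prime_gt_0_nat)
    also have "\<dots> = 2 * 2 ^ card (prime_factors m')"
      using card_sqrts_one_odd_prime_power[of "int p" e] \<open>0 < e\<close> \<open>odd p\<close> p
        less.IH[OF \<open>m' < m\<close> \<open>odd m'\<close>] by simp
    also have "\<dots> = 2 ^ card (prime_factors m)"
      using card_prime_factors_mult[of "p^e" m'] m cop \<open>0 < m'\<close> \<open>0 < e\<close> p
      by (simp add: prime_factors_power prime_prime_factors prime_gt_0_nat)
    finally show ?thesis .
  qed
qed

lemma card_sqrts_one_four_times:
  fixes d :: nat
  assumes "0 < d"
  shows "card (sqrts_one (4 * int d)) = 2 * 2 ^ card (prime_factors d)"
proof -
  define k where "k = multiplicity 2 d"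
  obtain m where d: "d = 2^k * m" and "odd m"
    using multiplicity_decompose'[of d 2] assms by (auto simp: k_def)
  then have "0 < m" by (simp add: odd_pos)
  have cop: "coprime ((2::nat)^k) m" "coprime (4 * (2::int)^k) (int m)"
    using \<open>odd m\<close> coprime_power_left_iff[of "2::int" 2 "int m"] by simp_all
  have "card (sqrts_one (4 * int d)) = card (sqrts_one (4 * 2^k)) * card (sqrts_one (int m))"
    using card_sqrts_one_mult[OF _ _ cop(2)] \<open>0 < m\<close> d by (simp add: mult.assoc)
  also have "\<dots> = 2 * (2 ^ card (prime_factors ((2::nat)^k)) * 2 ^ card (prime_factors m))"
    using \<open>odd m\<close> by (simp add: card_sqrts_one_two_power card_sqrts_one_odd)
  also have "\<dots> = 2 * 2 ^ card (prime_factors d)"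
    using card_prime_factors_mult[of "2^k" m] d cop \<open>0 < m\<close> by (simp add: power_add)
  finally show ?thesis .
qed

section \<open>Square roots modulo 4D, counted modulo 2D\<close>

(* Solutions of t^2 = c modulo 4D are well defined modulo 2D, since (t + 2D)^2 = t^2 modulo 4D. *)
definition half_sqrts :: "int \<Rightarrow> int \<Rightarrow> int set" where
  "half_sqrts D c = {t. 0 \<le> t \<and> t < 2 * D \<and> 4 * D dvd t^2 - c}"

lemma finite_half_sqrts [simp]: "finite (half_sqrts D c)"
  by (rule finite_subset[of _ "{0..<2 * D}"]) (auto simp: half_sqrts_def)

lemma half_sqrts_subset: "half_sqrts D c \<subseteq> {0..<2 * D}"
  by (auto simp: half_sqrts_def)

lemma half_sqrts_dvd: "t \<in> half_sqrts D c \<Longrightarrow> 2 * D dvd t^2 - c"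
  by (rule dvd_trans[of _ "4 * D"]) (simp_all add: half_sqrts_def)

lemma half_sqrts_parity:
  assumes "t \<in> half_sqrts D c"
  shows "2 dvd t - a \<longleftrightarrow> 2 dvd c - a"
proof -
  have "2 dvd t^2 - c" using half_sqrts_dvd[OF assms] by (rule dvd_trans[rotated]) simp
  then show ?thesis by simp
qed

lemma mod_in_half_sqrts:
  assumes "0 < D" "4 * D dvd t^2 - c"
  shows "t mod (2 * D) \<in> half_sqrts D c"
proof -
  have "4 * D dvd (t mod (2 * D))^2 - c"
    using assms(2) by (subst dvd_square_mod_iff) (simp_all add: power2_eq_square)
  then show ?thesis using assms(1) by (simp add: half_sqrts_def)
qed

lemma card_sqrts_one_eq_double_half_sqrts:
  assumes "0 < D"
  shows "card (sqrts_one (4 * D)) = 2 * card (half_sqrts D 1)"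
proof -
  let ?shift = "\<lambda>t. t + 2 * D"
  have shift_sq: "(t + 2 * D)^2 - 1 = (t^2 - 1) + 4 * D * (t + D)" for t
    by (simp add: power2_eq_square algebra_simps)
  have "sqrts_one (4 * D) = half_sqrts D 1 \<union> ?shift ` half_sqrts D 1"
  proof (intro set_eqI iffI)
    fix t assume t: "t \<in> sqrts_one (4 * D)"
    show "t \<in> half_sqrts D 1 \<union> ?shift ` half_sqrts D 1"
    proof (cases "t < 2 * D")
      case True
      then show ?thesis using t by (simp add: sqrts_one_def half_sqrts_def)
    next
      case False
      have "t mod (2 * D) = (t - 2 * D) mod (2 * D)" by simp
      also have "\<dots> = t - 2 * D"
        using t False by (intro mod_pos_pos_trivial) (simp_all add: sqrts_one_def)
      finally have "t = ?shift (t mod (2 * D))" by simp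
      moreover have "t mod (2 * D) \<in> half_sqrts D 1"
        using t assms by (intro mod_in_half_sqrts) (simp_all add: sqrts_one_def)
      ultimately show ?thesis by blast
    qed
  next
    fix t assume "t \<in> half_sqrts D 1 \<union> ?shift ` half_sqrts D 1"
    then show "t \<in> sqrts_one (4 * D)"
    proof
      assume "t \<in> half_sqrts D 1"
      then show ?thesis by (simp add: sqrts_one_def half_sqrts_def)
    next
      assume "t \<in> ?shift ` half_sqrts D 1"
      then obtain s where s: "s \<in> half_sqrts D 1" "t = s + 2 * D" by blast
      then have "4 * D dvd (s^2 - 1) + 4 * D * (s + D)" by (simp add: half_sqrts_def)
      then show ?thesis using s unfolding shift_sq[symmetric] by (simp add: sqrts_one_def half_sqrts_def)
    qed
  qed
  moreover have "half_sqrts D 1 \<inter> ?shift ` half_sqrts D 1 = {}"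
    by (auto simp: half_sqrts_def)
  ultimately have "card (sqrts_one (4 * D)) = card (half_sqrts D 1) + card (?shift ` half_sqrts D 1)"
    by (simp add: card_Un_disjoint)
  then show ?thesis by (simp add: card_image)
qed

lemma card_half_sqrts_one:
  fixes d :: nat
  assumes "0 < d"
  shows "card (half_sqrts (int d) 1) = 2 ^ card (prime_factors d)"
  using card_sqrts_one_eq_double_half_sqrts[of "int d"] card_sqrts_one_four_times[OF assms] assms
  by simp

lemma inj_on_mult_mod:
  fixes D w v :: int
  assumes "2 * D dvd w * v - 1"
  shows "inj_on (\<lambda>t. t * w mod (2 * D)) {0..<2 * D}"
proof
  fix x y assume x: "x \<in> {0..<2 * D}" and y: "y \<in> {0..<2 * D}"
    and "x * w mod (2 * D) = y * w mod (2 * D)"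
  then have "2 * D dvd (x - y) * w" by (simp add: mod_eq_dvd_iff algebra_simps)
  then have "2 * D dvd (x - y) * w * v" by (rule dvd_mult2)
  moreover have "2 * D dvd (x - y) * (w * v - 1)" using assms by (rule dvd_mult)
  ultimately have "2 * D dvd (x - y) * w * v - (x - y) * (w * v - 1)" by (rule dvd_diff)
  then have "2 * D dvd x - y" by (simp add: algebra_simps)
  then show "x = y" using x y by (rule eq_if_dvd_diff)
qed

lemma mult_mod_in_half_sqrts:
  assumes "0 < D" "t \<in> half_sqrts D c" "4 * D dvd c' - w^2 * c"
  shows "t * w mod (2 * D) \<in> half_sqrts D c'"
proof (rule mod_in_half_sqrts[OF assms(1)])
  have "4 * D dvd w^2 * (t^2 - c) - (c' - w^2 * c)"
    using assms(2,3) by (simp add: half_sqrts_def dvd_diff)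
  moreover have "(t * w)^2 - c' = w^2 * (t^2 - c) - (c' - w^2 * c)"
    by (simp add: power2_eq_square algebra_simps)
  ultimately show "4 * D dvd (t * w)^2 - c'" by (simp only:)
qed

lemma card_half_sqrts_scale:
  assumes "0 < D" "2 * D dvd w * v - 1" "4 * D dvd c' - w^2 * c"
  shows "card (half_sqrts D c) = card (half_sqrts D c')"
proof (rule card_bij_eq)
  obtain k where "w * v - 1 = 2 * D * k" using assms(2) by blast
  then have wv: "w * v = 1 + 2 * D * k" by simp
  have "c - v^2 * c' = c * (1 - (w * v)^2) - v^2 * (c' - w^2 * c)"
    by (simp add: power2_eq_square algebra_simps)
  also have "\<dots> = - (4 * D) * (k * (D * k + 1) * c) - v^2 * (c' - w^2 * c)"
    unfolding wv by (simp add: power2_eq_square algebra_simps)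
  finally have "4 * D dvd c - v^2 * c'" using assms(3) by (simp add: dvd_diff)
  then show "(\<lambda>t. t * v mod (2 * D)) ` half_sqrts D c' \<subseteq> half_sqrts D c"
    using assms(1) mult_mod_in_half_sqrts by blast
  show "(\<lambda>t. t * w mod (2 * D)) ` half_sqrts D c \<subseteq> half_sqrts D c'"
    using assms(1,3) mult_mod_in_half_sqrts by blast
  show "inj_on (\<lambda>t. t * w mod (2 * D)) (half_sqrts D c)"
    by (rule inj_on_subset[OF inj_on_mult_mod[OF assms(2)] half_sqrts_subset])
  have "2 * D dvd v * w - 1" using assms(2) by (simp add: mult.commute)
  then show "inj_on (\<lambda>t. t * v mod (2 * D)) (half_sqrts D c')"
    by (rule inj_on_subset[OF inj_on_mult_mod half_sqrts_subset])
qed simp_all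

lemma card_half_sqrts_shift:
  assumes "0 < D" "D mod 4 = 3"
  shows "card (half_sqrts D (D + 1)) = card (half_sqrts D 1)"
proof (rule card_bij_eq)
  let ?shift = "\<lambda>t. (t + D) mod (2 * D)"
  have "odd D" using assms(2) by presburger
  have D_dvd: "4 * D dvd D * k" if "4 dvd k" for k
    using that by (simp add: mult.commute mult_dvd_mono)
  have "inj_on ?shift {0..<2 * D}"
    by (rule inj_onI) (simp add: mod_eq_dvd_iff eq_if_dvd_diff)
  then show "inj_on ?shift (half_sqrts D (D + 1))" "inj_on ?shift (half_sqrts D 1)"
    using half_sqrts_subset by (blast intro: inj_on_subset)+
  show "?shift ` half_sqrts D (D + 1) \<subseteq> half_sqrts D 1"
  proof clarify
    fix t assume t: "t \<in> half_sqrts D (D + 1)"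
    then have dvd: "4 * D dvd t^2 - D - 1" by (simp add: half_sqrts_def algebra_simps)
    have "2 dvd t^2 - D - 1" using dvd by (rule dvd_trans[rotated]) simp
    then have "even t" using \<open>odd D\<close> by simp
    then have "4 * D dvd D * (2 * t + D + 1)" using assms(2) by (intro D_dvd) presburger
    with dvd have "4 * D dvd (t^2 - D - 1) + D * (2 * t + D + 1)" by (rule dvd_add)
    moreover have "(t^2 - D - 1) + D * (2 * t + D + 1) = (t + D)^2 - 1"
      by (simp add: power2_eq_square algebra_simps)
    ultimately show "?shift t \<in> half_sqrts D 1" using assms(1) by (simp add: mod_in_half_sqrts)
  qed
  show "?shift ` half_sqrts D 1 \<subseteq> half_sqrts D (D + 1)"
  proof clarify
    fix t assume t: "t \<in> half_sqrts D 1"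
    then have dvd: "4 * D dvd t^2 - 1" by (simp add: half_sqrts_def)
    have "2 dvd t^2 - 1" using dvd by (rule dvd_trans[rotated]) simp
    then have "odd t" by simp
    then have "4 * D dvd D * (2 * t + D - 1)" using assms(2) by (intro D_dvd) presburger
    with dvd have "4 * D dvd (t^2 - 1) + D * (2 * t + D - 1)" by (rule dvd_add)
    moreover have "(t^2 - 1) + D * (2 * t + D - 1) = (t + D)^2 - (D + 1)"
      by (simp add: power2_eq_square algebra_simps)
    ultimately show "?shift t \<in> half_sqrts D (D + 1)" using assms(1) by (simp add: mod_in_half_sqrts)
  qed
qed simp_all

lemma card_half_sqrts_eight_dvd:
  assumes "0 < D" "8 dvd D"
  shows "card (half_sqrts D (D + 1)) = card (half_sqrts D 1)"
proof -
  obtain j where j: "D = 8 * j" using assms(2) by blast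
  (* w = 1 + D/2 + D^2/8 truncates the binomial series of sqrt (1 + D); v is its inverse modulo 2D. *)
  define w where "w = 1 + 4 * j + 8 * j^2"
  define v where "v = w * (1 - D)"
  have w_sq: "(D + 1) - w^2 * 1 = - (4 * D) * (j * (1 + 2 * j + 2 * j^2))"
    unfolding w_def j by (simp add: power2_eq_square algebra_simps)
  then have "w * v - 1 = 2 * D * (2 * j * (1 + 2 * j + 2 * j^2) * (1 - D) - 4 * j)"
    unfolding v_def w_def j by (simp add: power2_eq_square algebra_simps)
  then have "2 * D dvd w * v - 1" by (metis dvd_triv_left)
  moreover have "4 * D dvd (D + 1) - w^2 * 1" unfolding w_sq by simp
  ultimately show ?thesis by (rule card_half_sqrts_scale[OF assms(1), symmetric])
qed

lemma half_sqrts_eq_empty: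
  assumes "D mod 8 = 4"
  shows "half_sqrts D (D + 1) = {}"
proof (rule ccontr)
  assume "half_sqrts D (D + 1) \<noteq> {}"
  then obtain t where "4 * D dvd t^2 - (D + 1)" by (auto simp: half_sqrts_def)
  moreover have "8 dvd 4 * D" using assms by presburger
  ultimately have "8 dvd t^2 - (D + 1)" by (rule dvd_trans[rotated])
  then have "t^2 mod 8 = (D + 1) mod 8" by (simp add: mod_eq_dvd_iff)
  also have "\<dots> = 5" using assms by presburger
  finally have "(t mod 8)^2 mod 8 = 5" by (simp add: power_mod)
  moreover have "t mod 8 \<in> {0, 1, 2, 3, 4, 5, 6, 7}" by (simp, presburger)
  ultimately show False by (auto simp: power2_eq_square)
qed

section \<open>Coordinates on the discriminant group\<close>

definition disc_coords :: "int \<Rightarrow> (int \<times> int) set" where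
  "disc_coords D = {0..<2} \<times> {0..<2 * D}"

definition disc_vec :: "int \<Rightarrow> int \<times> int \<Rightarrow> rat \<times> rat" where
  "disc_vec D x = (of_int (fst x) / 2, of_int (snd x) / of_int (2 * D))"

definition coord_add :: "int \<Rightarrow> int \<times> int \<Rightarrow> int \<times> int \<Rightarrow> int \<times> int" where
  "coord_add D x y = ((fst x + fst y) mod 2, (snd x + snd y) mod (2 * D))"

(* 2D times the value of the form at disc_vec D x, so that q_S is coord_quad D modulo 4D. *)
definition coord_quad :: "int \<Rightarrow> int \<times> int \<Rightarrow> int" where
  "coord_quad D x = D * fst x ^ 2 - snd x ^ 2"

lemma finite_disc_coords [simp]: "finite (disc_coords D)"
  by (simp add: disc_coords_def)

lemma coord_add_in_disc_coords: "0 < D \<Longrightarrow> coord_add D x y \<in> disc_coords D"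
  by (simp add: coord_add_def disc_coords_def)

lemma disc_vec_eq_iff: "0 < D \<Longrightarrow> disc_vec D x = disc_vec D y \<longleftrightarrow> x = y"
  by (cases x; cases y) (auto simp: disc_vec_def)

lemma frac_of_int_div:
  assumes "0 < M"
  shows "frac (of_int k / of_int M :: rat) = of_int (k mod M) / of_int M"
proof -
  have "(of_int k / of_int M :: rat) = of_int (k div M) + of_int (k mod M) / of_int M"
    using assms by (simp add: field_simps flip: of_int_mult of_int_add)
  then show ?thesis using assms by (simp add: frac_unique_iff)
qed

lemma frac_vec_disc_vec:
  "0 < D \<Longrightarrow> frac_vec (disc_vec D x) = disc_vec D (fst x mod 2, snd x mod (2 * D))"
  using frac_of_int_div[of 2] frac_of_int_div[of "2 * D"]
  by (simp add: frac_vec_def disc_vec_def)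

lemma mem_dual_lattice_iff:
  assumes "0 < D"
  shows "x \<in> dual_lattice 2 (- 2 * D) \<longleftrightarrow> x \<in> range (disc_vec D)"
proof
  assume x: "x \<in> dual_lattice 2 (- 2 * D)"
  have "2 * fst x \<in> \<int>" "2 * of_int D * snd x \<in> \<int>"
    using x[unfolded dual_lattice_def, simplified, rule_format, of 1 0]
      x[unfolded dual_lattice_def, simplified, rule_format, of 0 1]
    by (simp_all add: diag_form_def)
  then obtain a b where "2 * fst x = of_int a" "2 * of_int D * snd x = of_int b"
    by (auto elim!: Ints_cases)
  then have "x = disc_vec D (a, b)"
    using assms by (cases x) (simp add: disc_vec_def field_simps)
  then show "x \<in> range (disc_vec D)" by blast
next
  assume "x \<in> range (disc_vec D)"
  then obtain a b where x: "x = disc_vec D (a, b)" by auto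
  have "diag_form 2 (- 2 * D) x (of_int m, of_int n) = of_int (a * m - b * n)" for m n
    using assms by (simp add: x disc_vec_def diag_form_def field_simps)
  then show "x \<in> dual_lattice 2 (- 2 * D)" by (simp add: dual_lattice_def)
qed

lemma disc_group_eq:
  assumes "0 < D"
  shows "disc_group 2 (- 2 * D) = disc_vec D ` disc_coords D"
proof (intro set_eqI iffI)
  fix y assume "y \<in> disc_group 2 (- 2 * D)"
  then obtain z where z: "z \<in> dual_lattice 2 (- 2 * D)" "y = frac_vec z"
    by (auto simp: disc_group_def)
  then have "z \<in> range (disc_vec D)" using mem_dual_lattice_iff[OF assms] by blast
  then obtain x where "y = frac_vec (disc_vec D x)" using z by blast
  then have "y = disc_vec D (fst x mod 2, snd x mod (2 * D))"
    using assms by (simp add: frac_vec_disc_vec)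
  moreover have "(fst x mod 2, snd x mod (2 * D)) \<in> disc_coords D"
    using assms by (simp add: disc_coords_def)
  ultimately show "y \<in> disc_vec D ` disc_coords D" by blast
next
  fix y assume "y \<in> disc_vec D ` disc_coords D"
  then obtain a b where ab: "(a, b) \<in> disc_coords D" "y = disc_vec D (a, b)" by auto
  then have "frac_vec y = y" using assms by (simp add: frac_vec_disc_vec disc_coords_def)
  moreover have "y \<in> dual_lattice 2 (- 2 * D)" using ab mem_dual_lattice_iff[OF assms] by blast
  ultimately show "y \<in> disc_group 2 (- 2 * D)" unfolding disc_group_def by (metis image_eqI)
qed

lemma disc_add_disc_vec:
  "0 < D \<Longrightarrow> disc_add (disc_vec D x) (disc_vec D y) = disc_vec D (coord_add D x y)"
  using frac_vec_disc_vec[of D "(fst x + fst y, snd x + snd y)"]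
  by (simp add: disc_add_def disc_vec_def coord_add_def add_divide_distrib)

lemma cong_mod2_diag_form_disc_vec_iff:
  assumes "0 < D"
  shows "cong_mod2 (diag_form 2 (- 2 * D) (disc_vec D x) (disc_vec D x))
           (diag_form 2 (- 2 * D) (disc_vec D y) (disc_vec D y))
         \<longleftrightarrow> 4 * D dvd coord_quad D x - coord_quad D y"
proof -
  have eq: "(diag_form 2 (- 2 * D) (disc_vec D x) (disc_vec D x)
          - diag_form 2 (- 2 * D) (disc_vec D y) (disc_vec D y)) / 2
        = of_int (coord_quad D x - coord_quad D y) / (of_int (4 * D) :: rat)"
    using assms by (simp add: diag_form_def disc_vec_def coord_quad_def field_simps power2_eq_square)
  show ?thesis
    unfolding cong_mod2_def eq of_int_div_of_int_in_Ints_iff using assms by simp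
qed

section \<open>Endomorphisms in coordinates\<close>

definition coord_lin :: "int \<Rightarrow> int \<times> int \<Rightarrow> int \<times> int \<Rightarrow> int \<times> int \<Rightarrow> int \<times> int" where
  "coord_lin D u v x =
     ((fst x * fst u + snd x * fst v) mod 2, (fst x * snd u + snd x * snd v) mod (2 * D))"

(* Conditions on the images u, v of the generators (1, 0), (0, 1): 2u = 0, q(u) = q(1, 0),
   q(v) = q(0, 1), and b(u, v) = 0 for the bilinear form 2D b(x, y) = D x1 y1 - x2 y2. *)
definition isometric_images :: "int \<Rightarrow> int \<times> int \<Rightarrow> int \<times> int \<Rightarrow> bool" where
  "isometric_images D u v \<longleftrightarrow>
     2 * D dvd 2 * snd u \<and>
     4 * D dvd coord_quad D u - coord_quad D (1, 0) \<and>
     4 * D dvd coord_quad D v - coord_quad D (0, 1) \<and>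
     2 * D dvd D * fst u * fst v - snd u * snd v"

lemma coord_lin_in_disc_coords: "0 < D \<Longrightarrow> coord_lin D u v x \<in> disc_coords D"
  by (simp add: coord_lin_def disc_coords_def)

lemma coord_lin_unit1: "u \<in> disc_coords D \<Longrightarrow> coord_lin D u v (1, 0) = u"
  by (cases u) (simp add: coord_lin_def disc_coords_def)

lemma coord_lin_unit2: "v \<in> disc_coords D \<Longrightarrow> coord_lin D u v (0, 1) = v"
  by (cases v) (simp add: coord_lin_def disc_coords_def)

lemma coord_lin_zero: "coord_lin D u v (0, 0) = (0, 0)"
  by (simp add: coord_lin_def)

lemma coord_add_coord_lin: "coord_add D (coord_lin D u v x) v = coord_lin D u v (fst x, snd x + 1)"
  by (simp add: coord_add_def coord_lin_def mod_add_left_eq mod_add_right_eq algebra_simps)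

lemma coord_lin_mod:
  assumes "2 * D dvd 2 * snd u"
  shows "coord_lin D u v (a mod 2, b mod (2 * D)) = coord_lin D u v (a, b)"
proof -
  have "(a mod 2 * fst u + b mod (2 * D) * fst v) mod 2 = (a * fst u + b * fst v) mod 2"
    by (intro mod_add_cong mod_mult_mod_eq) (simp_all add: mult.assoc)
  moreover have "(a mod 2 * snd u + b mod (2 * D) * snd v) mod (2 * D) = (a * snd u + b * snd v) mod (2 * D)"
    using assms by (intro mod_add_cong mod_mult_mod_eq) simp_all
  ultimately show ?thesis by (simp add: coord_lin_def)
qed

lemma coord_lin_add:
  assumes "2 * D dvd 2 * snd u"
  shows "coord_lin D u v (coord_add D x y) = coord_add D (coord_lin D u v x) (coord_lin D u v y)"
  using coord_lin_mod[OF assms, where a = "fst x + fst y" and b = "snd x + snd y"]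
  by (simp add: coord_add_def coord_lin_def mod_add_eq algebra_simps)

lemma coord_quad_mod: "4 * D dvd coord_quad D (a mod 2, b mod (2 * D)) - coord_quad D (a, b)"
proof -
  define i j where "i = a div 2" and "j = b div (2 * D)"
  have a: "a mod 2 = a - 2 * i" and b: "b mod (2 * D) = b - 2 * D * j"
    by (simp_all add: i_def j_def algebra_simps flip: minus_div_mult_eq_mod)
  have "coord_quad D (a mod 2, b mod (2 * D)) - coord_quad D (a, b)
      = 4 * D * (i * i - a * i + b * j - D * j * j)"
    unfolding a b by (simp add: coord_quad_def power2_eq_square algebra_simps)
  then show ?thesis by simp
qed

lemma coord_quad_coord_lin:
  assumes "isometric_images D u v"
  shows "4 * D dvd coord_quad D (coord_lin D u v x) - coord_quad D x"
proof -
  obtain a b where x: "x = (a, b)" by (cases x)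
  obtain k where k: "D * fst u * fst v - snd u * snd v = 2 * D * k"
    using assms by (auto simp: isometric_images_def)
  let ?y = "(a * fst u + b * fst v, a * snd u + b * snd v)"
  have "coord_quad D ?y - coord_quad D x
      = a^2 * (coord_quad D u - coord_quad D (1, 0)) + b^2 * (coord_quad D v - coord_quad D (0, 1))
        + 2 * a * b * (D * fst u * fst v - snd u * snd v)"
    by (simp add: x coord_quad_def power2_eq_square algebra_simps)
  also have "\<dots> = a^2 * (coord_quad D u - coord_quad D (1, 0))
      + b^2 * (coord_quad D v - coord_quad D (0, 1)) + 4 * D * (a * b * k)"
    unfolding k by (simp add: algebra_simps)
  finally have expand: "coord_quad D ?y - coord_quad D x = \<dots>" .
  have "4 * D dvd coord_quad D ?y - coord_quad D x"
    using assms unfolding expand by (simp add: isometric_images_def)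
  with coord_quad_mod[of D "fst ?y" "snd ?y"]
  have "4 * D dvd (coord_quad D (coord_lin D u v x) - coord_quad D ?y) + (coord_quad D ?y - coord_quad D x)"
    unfolding x coord_lin_def fst_conv snd_conv by (rule dvd_add)
  then show ?thesis by simp
qed

section \<open>Elements of O(q_S) and the images of the generators\<close>

definition coord_map :: "int \<Rightarrow> (rat \<times> rat \<Rightarrow> rat \<times> rat) \<Rightarrow> int \<times> int \<Rightarrow> int \<times> int" where
  "coord_map D f x = inv (disc_vec D) (f (disc_vec D x))"

definition basis_images :: "int \<Rightarrow> (rat \<times> rat \<Rightarrow> rat \<times> rat) \<Rightarrow> (int \<times> int) \<times> (int \<times> int)" where
  "basis_images D f = (coord_map D f (1, 0), coord_map D f (0, 1))"

definition lin_extension :: "int \<Rightarrow> int \<times> int \<Rightarrow> int \<times> int \<Rightarrow> rat \<times> rat \<Rightarrow> rat \<times> rat" where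
  "lin_extension D u v y =
     (if y \<in> disc_vec D ` disc_coords D then disc_vec D (coord_lin D u v (inv (disc_vec D) y)) else y)"

definition O_images :: "int \<Rightarrow> ((int \<times> int) \<times> (int \<times> int)) set" where
  "O_images D = {(u, v). u \<in> disc_coords D \<and> v \<in> disc_coords D \<and> isometric_images D u v
                   \<and> inj_on (coord_lin D u v) (disc_coords D)}"

lemma inj_disc_vec: "0 < D \<Longrightarrow> inj (disc_vec D)"
  by (simp add: inj_def disc_vec_eq_iff)

lemma inv_disc_vec [simp]: "0 < D \<Longrightarrow> inv (disc_vec D) (disc_vec D x) = x"
  by (simp add: inv_f_f inj_disc_vec)

lemma bij_betw_coord_map:
  assumes "0 < D" "bij_betw f (disc_vec D ` disc_coords D) (disc_vec D ` disc_coords D)"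
    and "x \<in> disc_coords D"
  shows "coord_map D f x \<in> disc_coords D" "f (disc_vec D x) = disc_vec D (coord_map D f x)"
proof -
  obtain y where "y \<in> disc_coords D" "f (disc_vec D x) = disc_vec D y"
    using bij_betw_apply[OF assms(2)] assms(3) by blast
  then show "coord_map D f x \<in> disc_coords D" "f (disc_vec D x) = disc_vec D (coord_map D f x)"
    using assms(1) by (simp_all add: coord_map_def)
qed

lemma mem_O_disc_iff:
  assumes "0 < D"
  shows "f \<in> O_disc 2 (- 2 * D) \<longleftrightarrow>
    bij_betw f (disc_vec D ` disc_coords D) (disc_vec D ` disc_coords D) \<and>
    (\<forall>x\<in>disc_coords D. \<forall>y\<in>disc_coords D.
       f (disc_vec D (coord_add D x y)) = disc_add (f (disc_vec D x)) (f (disc_vec D y))) \<and>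
    (\<forall>x\<in>disc_coords D. 4 * D dvd coord_quad D (coord_map D f x) - coord_quad D x) \<and>
    (\<forall>y. y \<notin> disc_vec D ` disc_coords D \<longrightarrow> f y = y)"
proof -
  let ?S = "disc_vec D ` disc_coords D"
  have quad_iff: "(\<forall>x\<in>disc_coords D. cong_mod2
        (diag_form 2 (- 2 * D) (f (disc_vec D x)) (f (disc_vec D x)))
        (diag_form 2 (- 2 * D) (disc_vec D x) (disc_vec D x)))
      \<longleftrightarrow> (\<forall>x\<in>disc_coords D. 4 * D dvd coord_quad D (coord_map D f x) - coord_quad D x)"
    if bij: "bij_betw f ?S ?S"
  proof -
    have "f (disc_vec D x) = disc_vec D (coord_map D f x)" if "x \<in> disc_coords D" for x
      using bij_betw_coord_map[OF assms bij that] by simp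
    then show ?thesis using cong_mod2_diag_form_disc_vec_iff[OF assms] by auto
  qed
  show ?thesis
    unfolding O_disc_def disc_group_eq[OF assms] mem_Collect_eq ball_simps(9) disc_add_disc_vec[OF assms]
    using quad_iff by blast
qed

lemma coord_add_self_eq:
  assumes "z \<in> disc_coords D" "coord_add D z z = z"
  shows "z = (0, 0)"
proof -
  obtain a b where z: "z = (a, b)" "a \<in> {0..<2}" "b \<in> {0..<2 * D}"
    using assms(1) by (cases z) (auto simp: disc_coords_def)
  from assms(2) have "((a + a) mod 2, (b + b) mod (2 * D)) = (a, b)"
    unfolding z coord_add_def fst_conv snd_conv .
  then have "2 dvd a - 0" "2 * D dvd b - 0"
    using dvd_minus_mod[of 2 "a + a"] dvd_minus_mod[of "2 * D" "b + b"] by simp_all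
  then show ?thesis using z eq_if_dvd_diff[of 2 a 0] eq_if_dvd_diff[of "2 * D" b 0] by auto
qed

context
  fixes D :: int and f :: "rat \<times> rat \<Rightarrow> rat \<times> rat"
  assumes D: "0 < D" and f: "f \<in> O_disc 2 (- 2 * D)"
begin

lemma O_disc_bij: "bij_betw f (disc_vec D ` disc_coords D) (disc_vec D ` disc_coords D)"
  using f unfolding mem_O_disc_iff[OF D] by blast

lemma O_disc_outside: "y \<notin> disc_vec D ` disc_coords D \<Longrightarrow> f y = y"
  using f unfolding mem_O_disc_iff[OF D] by blast

lemma O_disc_coord_map:
  "x \<in> disc_coords D \<Longrightarrow> coord_map D f x \<in> disc_coords D"
  "x \<in> disc_coords D \<Longrightarrow> f (disc_vec D x) = disc_vec D (coord_map D f x)"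
  using bij_betw_coord_map[OF D O_disc_bij] by simp_all

lemma O_disc_coord_map_add:
  assumes "x \<in> disc_coords D" "y \<in> disc_coords D"
  shows "coord_map D f (coord_add D x y) = coord_add D (coord_map D f x) (coord_map D f y)"
proof -
  have "f (disc_vec D (coord_add D x y)) = disc_add (f (disc_vec D x)) (f (disc_vec D y))"
    using f assms unfolding mem_O_disc_iff[OF D] by blast
  also have "\<dots> = disc_vec D (coord_add D (coord_map D f x) (coord_map D f y))"
    using assms by (simp add: O_disc_coord_map disc_add_disc_vec[OF D])
  finally show ?thesis using D by (subst coord_map_def) simp
qed

lemma O_disc_coord_map_zero: "coord_map D f (0, 0) = (0, 0)"
proof (rule coord_add_self_eq)
  have zero: "(0, 0) \<in> disc_coords D" using D by (simp add: disc_coords_def)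
  then show "coord_map D f (0, 0) \<in> disc_coords D" by (rule O_disc_coord_map)
  show "coord_add D (coord_map D f (0, 0)) (coord_map D f (0, 0)) = coord_map D f (0, 0)"
    using O_disc_coord_map_add[OF zero zero] by (simp add: coord_add_def)
qed

lemma O_disc_coord_map_quad:
  "x \<in> disc_coords D \<Longrightarrow> 4 * D dvd coord_quad D (coord_map D f x) - coord_quad D x"
  using f unfolding mem_O_disc_iff[OF D] by blast

lemma O_disc_coord_map_linear:
  assumes "x \<in> disc_coords D"
  shows "coord_map D f x = coord_lin D (coord_map D f (1, 0)) (coord_map D f (0, 1)) x"
proof -
  let ?u = "coord_map D f (1, 0)" and ?v = "coord_map D f (0, 1)"
  have e1: "(1, 0) \<in> disc_coords D" and e2: "(0, 1) \<in> disc_coords D"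
    using D by (simp_all add: disc_coords_def)
  have "coord_map D f (a, int k) = coord_lin D ?u ?v (a, int k)"
    if "a \<in> {0, 1}" "int k < 2 * D" for a k
    using that
  proof (induction k)
    case 0
    then show ?case
      by (auto simp: coord_lin_zero O_disc_coord_map_zero coord_lin_unit1[OF O_disc_coord_map(1)[OF e1]])
  next
    case (Suc k)
    then have "(a, int k) \<in> disc_coords D" "coord_add D (a, int k) (0, 1) = (a, int (Suc k))"
      by (auto simp: disc_coords_def coord_add_def)
    then show ?case
      using O_disc_coord_map_add[OF _ e2, of "(a, int k)"] Suc coord_add_coord_lin[of D ?u ?v "(a, int k)"]
      by (simp add: add.commute)
  qed
  moreover obtain a k where "x = (a, int k)" "a \<in> {0, 1}" "int k < 2 * D"
  proof -
    obtain a b where "x = (a, b)" "0 \<le> a" "a < 2" "0 \<le> b" "b < 2 * D"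
      using assms by (cases x) (auto simp: disc_coords_def)
    moreover from this have "a \<in> {0, 1}" by auto
    ultimately show thesis by (intro that[of a "nat b"]) simp_all
  qed
  ultimately show ?thesis by blast
qed

lemma inj_on_O_disc_coord_map: "inj_on (coord_map D f) (disc_coords D)"
proof
  fix x y assume x: "x \<in> disc_coords D" and y: "y \<in> disc_coords D"
    and "coord_map D f x = coord_map D f y"
  then have "f (disc_vec D x) = f (disc_vec D y)" by (simp add: O_disc_coord_map)
  with x y O_disc_bij have "disc_vec D x = disc_vec D y"
    by (auto simp: bij_betw_def dest: inj_onD)
  then show "x = y" using D by (simp add: disc_vec_eq_iff)
qed

lemma O_disc_isometric_images:
  "isometric_images D (coord_map D f (1, 0)) (coord_map D f (0, 1))"
proof -
  define u v where "u = coord_map D f (1, 0)" and "v = coord_map D f (0, 1)"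
  have e1: "(1, 0) \<in> disc_coords D" and e2: "(0, 1) \<in> disc_coords D"
    using D by (simp_all add: disc_coords_def)
  have "coord_add D u u = coord_map D f (coord_add D (1, 0) (1, 0))"
    using O_disc_coord_map_add[OF e1 e1] by (simp add: u_def)
  also have "\<dots> = (0, 0)" by (simp add: coord_add_def O_disc_coord_map_zero)
  finally have order_u: "2 * D dvd 2 * snd u" by (simp add: coord_add_def mod_eq_0_iff_dvd)
  have quad_u: "4 * D dvd coord_quad D u - coord_quad D (1, 0)"
    and quad_v: "4 * D dvd coord_quad D v - coord_quad D (0, 1)"
    using O_disc_coord_map_quad e1 e2 by (simp_all add: u_def v_def)
  have "2 * D dvd D * fst u * fst v - snd u * snd v"
  proof -
    have "coord_add D (1, 0) (0, 1) = (1, 1)" using D by (simp add: coord_add_def)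
    then have quad_uv: "4 * D dvd coord_quad D (coord_add D u v) - coord_quad D (1, 1)"
      using O_disc_coord_map_quad[of "(1, 1)"] O_disc_coord_map_add[OF e1 e2] D
      by (simp add: u_def v_def disc_coords_def)
    have reduce: "4 * D dvd coord_quad D (coord_add D u v) - coord_quad D (fst u + fst v, snd u + snd v)"
      using coord_quad_mod by (simp add: coord_add_def)
    have "4 * D dvd (coord_quad D (coord_add D u v) - coord_quad D (1, 1))
        - (coord_quad D (coord_add D u v) - coord_quad D (fst u + fst v, snd u + snd v))
        - (coord_quad D u - coord_quad D (1, 0)) - (coord_quad D v - coord_quad D (0, 1))"
      by (rule dvd_diff[OF dvd_diff[OF dvd_diff[OF quad_uv reduce] quad_u] quad_v])
    also have "\<dots> = 2 * (D * fst u * fst v - snd u * snd v)"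
      by (simp add: coord_quad_def power2_eq_square algebra_simps)
    finally have "2 * (2 * D) dvd 2 * (D * fst u * fst v - snd u * snd v)" by simp
    then show ?thesis by (metis dvd_times_left_cancel_iff zero_neq_numeral)
  qed
  then show ?thesis using order_u quad_u quad_v by (simp add: isometric_images_def u_def v_def)
qed

lemma basis_images_mem_O_images: "basis_images D f \<in> O_images D"
proof -
  have "(1, 0) \<in> disc_coords D" "(0, 1) \<in> disc_coords D"
    using D by (simp_all add: disc_coords_def)
  moreover have "inj_on (coord_lin D (coord_map D f (1, 0)) (coord_map D f (0, 1))) (disc_coords D)"
    using inj_on_O_disc_coord_map by (rule inj_on_cong[THEN iffD1, rotated]) (simp add: O_disc_coord_map_linear)
  ultimately show ?thesis
    using O_disc_coord_map(1) O_disc_isometric_images by (simp add: basis_images_def O_images_def)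
qed

end

lemma inj_on_basis_images:
  assumes D: "0 < D"
  shows "inj_on (basis_images D) (O_disc 2 (- 2 * D))"
proof
  fix f g assume f: "f \<in> O_disc 2 (- 2 * D)" and g: "g \<in> O_disc 2 (- 2 * D)"
    and "basis_images D f = basis_images D g"
  then have same: "coord_map D f x = coord_map D g x" if "x \<in> disc_coords D" for x
    using O_disc_coord_map_linear[OF D f that] O_disc_coord_map_linear[OF D g that]
    by (simp add: basis_images_def)
  show "f = g"
  proof
    fix y show "f y = g y"
    proof (cases "y \<in> disc_vec D ` disc_coords D")
      case True
      then show ?thesis using same O_disc_coord_map(2)[OF D f] O_disc_coord_map(2)[OF D g] by auto
    next
      case False
      then show ?thesis using O_disc_outside[OF D f] O_disc_outside[OF D g] by simp
    qed
  qed
qed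

lemma lin_extension_disc_vec:
  "0 < D \<Longrightarrow> x \<in> disc_coords D \<Longrightarrow> lin_extension D u v (disc_vec D x) = disc_vec D (coord_lin D u v x)"
  by (simp add: lin_extension_def)

lemma coord_map_lin_extension:
  "0 < D \<Longrightarrow> x \<in> disc_coords D \<Longrightarrow> coord_map D (lin_extension D u v) x = coord_lin D u v x"
  by (simp add: coord_map_def lin_extension_disc_vec)

lemma lin_extension_mem_O_disc:
  assumes D: "0 < D" and uv: "(u, v) \<in> O_images D"
  shows "lin_extension D u v \<in> O_disc 2 (- 2 * D)"
proof -
  let ?F = "lin_extension D u v" and ?S = "disc_vec D ` disc_coords D"
  have iso: "isometric_images D u v" and inj: "inj_on (coord_lin D u v) (disc_coords D)"
    using uv by (simp_all add: O_images_def)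
  have image: "?F ` ?S = disc_vec D ` coord_lin D u v ` disc_coords D"
    using D by (simp add: image_image lin_extension_disc_vec cong: image_cong)
  have "inj_on (disc_vec D \<circ> coord_lin D u v) (disc_coords D)"
    using inj inj_on_subset[OF inj_disc_vec[OF D] subset_UNIV] by (rule comp_inj_on)
  then have "inj_on (?F \<circ> disc_vec D) (disc_coords D)"
    by (rule inj_on_cong[THEN iffD1, rotated]) (simp add: lin_extension_disc_vec[OF D])
  then have inj_F: "inj_on ?F ?S" by (rule inj_on_imageI)
  have "?F ` ?S \<subseteq> ?S" unfolding image using coord_lin_in_disc_coords[OF D] by blast
  then have "?F ` ?S = ?S" using inj_F by (intro endo_inj_surj) simp_all
  with inj_F have "bij_betw ?F ?S ?S" by (simp add: bij_betw_def)
  moreover have "?F (disc_vec D (coord_add D x y)) = disc_add (?F (disc_vec D x)) (?F (disc_vec D y))"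
    if "x \<in> disc_coords D" "y \<in> disc_coords D" for x y
    using that iso D coord_add_in_disc_coords[OF D]
    by (simp add: lin_extension_disc_vec coord_lin_add disc_add_disc_vec isometric_images_def)
  moreover have "4 * D dvd coord_quad D (coord_map D ?F x) - coord_quad D x" if "x \<in> disc_coords D" for x
    using coord_quad_coord_lin[OF iso] coord_map_lin_extension[OF D that] by simp
  moreover have "?F y = y" if "y \<notin> ?S" for y using that by (simp add: lin_extension_def)
  ultimately show ?thesis unfolding mem_O_disc_iff[OF D] by blast
qed

lemma basis_images_lin_extension:
  assumes D: "0 < D" and uv: "(u, v) \<in> O_images D"
  shows "basis_images D (lin_extension D u v) = (u, v)"
proof -
  have "(1, 0) \<in> disc_coords D" "(0, 1) \<in> disc_coords D" "u \<in> disc_coords D" "v \<in> disc_coords D"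
    using D uv by (simp_all add: disc_coords_def O_images_def)
  then show ?thesis
    using D by (simp add: basis_images_def coord_map_lin_extension coord_lin_unit1 coord_lin_unit2)
qed

lemma card_O_disc_eq_card_O_images:
  assumes D: "0 < D"
  shows "card (O_disc 2 (- 2 * D)) = card (O_images D)"
proof (rule bij_betw_same_card, rule bij_betw_imageI)
  show "inj_on (basis_images D) (O_disc 2 (- 2 * D))" by (rule inj_on_basis_images[OF D])
  show "basis_images D ` O_disc 2 (- 2 * D) = O_images D"
  proof
    show "basis_images D ` O_disc 2 (- 2 * D) \<subseteq> O_images D"
      using basis_images_mem_O_images[OF D] by blast
    show "O_images D \<subseteq> basis_images D ` O_disc 2 (- 2 * D)"
    proof clarify
      fix u v assume "(u, v) \<in> O_images D"
      then show "(u, v) \<in> basis_images D ` O_disc 2 (- 2 * D)"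
        using basis_images_lin_extension[OF D] lin_extension_mem_O_disc[OF D] by (metis image_eqI)
    qed
  qed
qed

section \<open>The two families of generator images\<close>

lemma inj_on_coord_lin_first:
  assumes "t \<in> half_sqrts D 1"
  shows "inj_on (coord_lin D (1, 0) (0, t)) (disc_coords D)"
proof (rule inj_onI, clarify)
  fix a b a' b'
  assume ab: "(a, b) \<in> disc_coords D" "(a', b') \<in> disc_coords D"
    and eq: "coord_lin D (1, 0) (0, t) (a, b) = coord_lin D (1, 0) (0, t) (a', b')"
  have "2 * D dvd t * t - 1"
    using half_sqrts_dvd[OF assms] by (simp add: power2_eq_square)
  then have "inj_on (\<lambda>b. b * t mod (2 * D)) {0..<2 * D}" by (rule inj_on_mult_mod)
  moreover have "b * t mod (2 * D) = b' * t mod (2 * D)" "a mod 2 = a' mod 2"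
    using eq by (simp_all add: coord_lin_def)
  ultimately show "a = a' \<and> b = b'"
    using ab by (auto simp: disc_coords_def dest: inj_onD)
qed

lemma inj_on_coord_lin_second:
  assumes "0 < D" and t: "t \<in> half_sqrts D (D + 1)" and "2 dvd t - \<alpha>"
  shows "inj_on (coord_lin D (\<alpha>, D) (1, t)) (disc_coords D)"
proof (rule inj_onI, clarify)
  fix a b a' b'
  assume ab: "(a, b) \<in> disc_coords D" "(a', b') \<in> disc_coords D"
    and eq: "coord_lin D (\<alpha>, D) (1, t) (a, b) = coord_lin D (\<alpha>, D) (1, t) (a', b')"
  define A B where "A = a - a'" and "B = b - b'"
  have first: "2 dvd A * \<alpha> + B" and second: "2 * D dvd A * D + B * t"
    using eq by (simp_all add: coord_lin_def mod_eq_dvd_iff A_def B_def algebra_simps)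
  have "2 dvd A * t + B"
    using first \<open>2 dvd t - \<alpha>\<close> dvd_add[OF dvd_mult[of 2 "t - \<alpha>" A]]
    by (simp add: algebra_simps)
  then have "2 * D dvd D * (A * t + B)" by (simp add: mult.commute mult_dvd_mono)
  then have "2 * D dvd (A * D + B * t) * t - B * (t^2 - (D + 1)) - D * (A * t + B)"
    by (rule dvd_diff[OF dvd_diff[OF dvd_mult2[OF second] dvd_mult[OF half_sqrts_dvd[OF t]]]])
  also have "(A * D + B * t) * t - B * (t^2 - (D + 1)) - D * (A * t + B) = B"
    by (simp add: power2_eq_square algebra_simps)
  finally have "b = b'" using ab eq_if_dvd_diff[of "2 * D" b b'] by (auto simp: B_def disc_coords_def)
  then have "2 * D dvd D * A" using second by (simp add: B_def mult.commute)
  then have "2 dvd a - a'" using \<open>0 < D\<close> by (simp add: A_def mult.commute[of 2 D])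
  then show "a = a' \<and> b = b'"
    using ab \<open>b = b'\<close> eq_if_dvd_diff[of 2 a a'] by (auto simp: disc_coords_def)
qed

lemma first_family_mem_O_images:
  assumes "0 < D" "t \<in> half_sqrts D 1"
  shows "((1, 0), (0, t)) \<in> O_images D"
proof -
  have "4 * D dvd 1 - t^2" using assms(2) by (simp add: half_sqrts_def dvd_diff_commute)
  then have "isometric_images D (1, 0) (0, t)"
    by (simp add: isometric_images_def coord_quad_def)
  then show ?thesis
    using assms inj_on_coord_lin_first by (simp add: O_images_def disc_coords_def half_sqrts_def)
qed

lemma second_family_mem_O_images:
  assumes D: "0 < D" and \<alpha>: "\<alpha> \<in> {0, 1}" "4 dvd D + 1 - \<alpha>" and t: "t \<in> half_sqrts D (D + 1)"
  shows "((\<alpha>, D), (1, t)) \<in> O_images D"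
proof -
  have "2 dvd D + 1 - \<alpha>" by (rule dvd_trans[OF _ \<alpha>(2)]) simp
  then have "2 dvd t - \<alpha>" using half_sqrts_parity[OF t] by blast
  then have "2 * D dvd D * \<alpha> * 1 - D * t"
    using times_dvd_times_iff[of D 2 "\<alpha> - t"] D by (simp add: algebra_simps)
  moreover have "4 * D dvd coord_quad D (\<alpha>, D) - coord_quad D (1, 0)"
  proof -
    have "4 dvd \<alpha> - D - 1" using \<alpha>(2) by presburger
    then have "4 * D dvd D * (\<alpha> - D - 1)" using times_dvd_times_iff[of D 4 "\<alpha> - D - 1"] D by simp
    moreover have "coord_quad D (\<alpha>, D) - coord_quad D (1, 0) = D * (\<alpha> - D - 1)"
      using \<alpha>(1) by (auto simp: coord_quad_def power2_eq_square algebra_simps)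
    ultimately show ?thesis by simp
  qed
  moreover have "4 * D dvd D + 1 - t^2" using t by (simp add: half_sqrts_def dvd_diff_commute)
  ultimately have "isometric_images D (\<alpha>, D) (1, t)"
    by (simp add: isometric_images_def coord_quad_def algebra_simps)
  then show ?thesis
    using D \<alpha>(1) t inj_on_coord_lin_second[OF D t \<open>2 dvd t - \<alpha>\<close>]
    by (auto simp: O_images_def disc_coords_def half_sqrts_def)
qed

lemma O_images_cases:
  assumes D: "0 < D" and uv: "(u, v) \<in> O_images D"
  obtains (first) t where "u = (1, 0)" "v = (0, t)" "t \<in> half_sqrts D 1"
    | (second) \<alpha> t where "u = (\<alpha>, D)" "v = (1, t)" "\<alpha> \<in> {0, 1}" "4 dvd D + 1 - \<alpha>"
        "t \<in> half_sqrts D (D + 1)"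
proof -
  obtain \<alpha> \<beta> s t where u: "u = (\<alpha>, \<beta>)" and v: "v = (s, t)" by (cases u, cases v)
  have "0 \<le> \<alpha>" "\<alpha> < 2" "0 \<le> s" "s < 2" and \<beta>: "0 \<le> \<beta>" "\<beta> < 2 * D" and t: "0 \<le> t" "t < 2 * D"
    using uv by (auto simp: O_images_def disc_coords_def u v)
  then have \<alpha>: "\<alpha> = 0 \<or> \<alpha> = 1" and s: "s = 0 \<or> s = 1" by auto
  have iso: "isometric_images D (\<alpha>, \<beta>) (s, t)" using uv by (simp add: O_images_def u v)
  have order: "2 * D dvd 2 * \<beta>" and bil: "2 * D dvd D * \<alpha> * s - \<beta> * t"
    using iso by (simp_all add: isometric_images_def)
  have quad_u: "4 * D dvd D * \<alpha>^2 - \<beta>^2 - D" and quad_v: "4 * D dvd D * s^2 - t^2 + 1"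
    using iso by (simp_all add: isometric_images_def coord_quad_def)
  have no_multiple: "\<not> c * D dvd D" if "1 < c" for c
    using times_dvd_times_iff[of D c 1] D that by (auto dest: zdvd_imp_le)
  obtain c where "0 \<le> c" "c < 2" "2 * \<beta> = 2 * D * c"
    using bounded_multipleE[OF _ order, of 2] D \<beta> by auto
  then have "\<beta> = 0 \<or> \<beta> = D" by (cases "c = 0") auto
  then show thesis
  proof
    assume "\<beta> = 0"
    have "\<alpha> = 1" using \<alpha> quad_u no_multiple[of 4] \<open>\<beta> = 0\<close> by auto
    moreover have "s = 0" using s bil no_multiple[of 2] \<open>\<beta> = 0\<close> \<open>\<alpha> = 1\<close> by auto
    moreover have "t \<in> half_sqrts D 1"
      using quad_v t \<open>s = 0\<close> by (simp add: half_sqrts_def dvd_diff_commute)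
    ultimately show thesis using first u v \<open>\<beta> = 0\<close> by simp
  next
    assume "\<beta> = D"
    then have "2 dvd \<alpha> * s - t"
      using bil times_dvd_times_iff[of D 2 "\<alpha> * s - t"] D by (simp add: algebra_simps)
    have "s = 1"
    proof (rule ccontr)
      assume "s \<noteq> 1"
      then have "s = 0" using s by simp
      then have "even t" "2 dvd 1 - t^2"
        using \<open>2 dvd \<alpha> * s - t\<close> quad_v dvd_trans[of 2 "4 * D" "1 - t^2"] by simp_all
      then show False by simp
    qed
    then have "t \<in> half_sqrts D (D + 1)"
      using quad_v t by (simp add: half_sqrts_def dvd_diff_commute algebra_simps)
    moreover have "4 dvd D + 1 - \<alpha>"
    proof -
      have "D * \<alpha>^2 - \<beta>^2 - D = D * (\<alpha> - D - 1)"
        using \<alpha> \<open>\<beta> = D\<close> by (auto simp: power2_eq_square algebra_simps)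
      then have "4 dvd \<alpha> - D - 1" using quad_u times_dvd_times_iff[of D 4] D by simp
      then show ?thesis by presburger
    qed
    ultimately show thesis using second u v \<alpha> \<open>\<beta> = D\<close> \<open>s = 1\<close> by auto
  qed
qed

lemma O_images_eq:
  assumes D: "0 < D"
  shows "O_images D = (\<lambda>t. ((1, 0), (0, t))) ` half_sqrts D 1
    \<union> (\<lambda>(\<alpha>, t). ((\<alpha>, D), (1, t))) ` ({\<alpha> \<in> {0, 1}. 4 dvd D + 1 - \<alpha>} \<times> half_sqrts D (D + 1))"
  (is "_ = ?first \<union> ?second")
proof (intro equalityI subsetI)
  fix p assume p: "p \<in> O_images D"
  obtain u v where "p = (u, v)" by (cases p)
  with p show "p \<in> ?first \<union> ?second"
    by (cases rule: O_images_cases[OF D]) auto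
next
  fix p assume "p \<in> ?first \<union> ?second"
  then show "p \<in> O_images D"
    using first_family_mem_O_images[OF D] second_family_mem_O_images[OF D] by auto
qed

lemma card_O_images:
  assumes D: "0 < D"
  shows "card (O_images D) = (if D mod 4 = 3 \<or> 8 dvd D then 2 else 1) * card (half_sqrts D 1)"
proof -
  let ?A = "{\<alpha> \<in> {0, 1}. 4 dvd D + 1 - \<alpha>}"
  have "card (O_images D) = card ((\<lambda>t. ((1::int, 0::int), (0::int, t))) ` half_sqrts D 1)
      + card ((\<lambda>(\<alpha>, t). ((\<alpha>, D), (1::int, t))) ` (?A \<times> half_sqrts D (D + 1)))"
    unfolding O_images_eq[OF D] using D by (intro card_Un_disjoint) auto
  also have "\<dots> = card (half_sqrts D 1) + card ?A * card (half_sqrts D (D + 1))"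
    by (subst card_image; auto simp: inj_on_def card_cartesian_product)+
  also have "card ?A * card (half_sqrts D (D + 1)) = (if D mod 4 = 3 \<or> 8 dvd D then card (half_sqrts D 1) else 0)"
  proof -
    have "D mod 4 = 3 \<or> 8 dvd D \<or> D mod 8 = 4 \<or> \<not> (D mod 4 = 3 \<or> 4 dvd D)" by presburger
    moreover have "?A = {0}" if "D mod 4 = 3" using that by auto presburger+
    moreover have "?A = {1}" if "4 dvd D" using that by auto presburger+
    moreover have "?A = {}" if "\<not> (D mod 4 = 3 \<or> 4 dvd D)" using that by auto presburger+
    moreover have "4 dvd D" "\<not> 8 dvd D" if "D mod 8 = 4" using that by presburger+
    moreover have "4 dvd D" if "8 dvd D" using that by presburger
    ultimately show ?thesis
      using D card_half_sqrts_shift card_half_sqrts_eight_dvd half_sqrts_eq_empty by auto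
  qed
  finally show ?thesis by simp
qed

theorem lemma4p4:
  fixes d :: nat
  assumes "d > 0"
  shows "card (O_disc 2 (- 2 * int d)) =
           (if d mod 4 = 3 \<or> 8 dvd d
            then 2 ^ (1 + card (prime_factors d))
            else 2 ^ card (prime_factors d))"
proof -
  have "card (O_disc 2 (- 2 * int d)) = card (O_images (int d))"
    by (rule card_O_disc_eq_card_O_images) (simp add: assms)
  also have "\<dots> = (if int d mod 4 = 3 \<or> 8 dvd int d then 2 else 1) * card (half_sqrts (int d) 1)"
    using assms by (simp add: card_O_images)
  also have "\<dots> = (if d mod 4 = 3 \<or> 8 dvd d then 2 else 1) * 2 ^ card (prime_factors d)"
    using assms by (simp add: card_half_sqrts_one flip: of_nat_mod) presburger
  finally show ?thesis by simp
qed

end
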